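(* Let $\mathbf B=(\mathbf b_1,\dots,\mathbf b_n)\in\mathbb Q^{d\times n}$ be a basis, $\gamma\ge2$, and $\mathbf B'=(\mathbf b_1',\dots,\mathbf b_n'):=A_{\mathbf B,\gamma}\mathbf B$. Then $\alpha_1\le\alpha_2\le\cdots\le\alpha_n$, and for every $i$, if $\alpha_i<\alpha_{i+1}$ then $\|\tilde{\mathbf b}_{i+1}'\|>(\gamma/2)\cdot\|\tilde{\mathbf b}_i'\|$.
   Context: Gram–Schmidt orthogonalization: $\tilde{\mathbf b}_1=\mathbf b_1$, $\tilde{\mathbf b}_i=\Pi_{\{\mathbf b_1,\dots,\mathbf b_{i-1}\}^\perp}(\mathbf b_i)$, where $\Pi_{S^\perp}$ is orthogonal projection onto the orthogonal complement of $\mathrm{span}(S)$; similarly $\tilde{\mathbf b}_i'$ for $\mathbf B'$. Define $\alpha_1=1$ and $\alpha_i=\max\{\alpha_{i-1},\lceil \|\tilde{\mathbf b}_i\|/(\gamma^i\|\mathbf b_1\|)\rceil\}$ for $i\ge2$. $A_{\mathbf B,\gamma}\in\mathbb R^{d\times d}$ is the unique linear map with $A_{\mathbf B,\gamma}\tilde{\mathbf b}_i=\tilde{\mathbf b}_i/\alpha_i$ for all $i$ and $A_{\mathbf B,\gamma}\mathbf y=\mathbf y$ for $\mathbf y\in\{\mathbf b_1,\dots,\mathbf b_n\}^\perp$. *)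

theory Defs
  imports "HOL-Analysis.Analysis"
begin

text \<open>Vectors live in \<open>real ^ 'd\<close> (d = CARD('d)); a sequence of n vectors is
  \<open>b :: nat \<Rightarrow> real ^ 'd\<close> with indices 1..n.\<close>

definition orth_compl :: "('a::real_inner) set \<Rightarrow> 'a set" where
  "orth_compl S = {y. \<forall>x\<in>span S. orthogonal x y}"

definition proj_perp :: "('a::euclidean_space) set \<Rightarrow> 'a \<Rightarrow> 'a" where
  "proj_perp S v = (THE w. w \<in> orth_compl S \<and> v - w \<in> span S)"

definition gso :: "(nat \<Rightarrow> 'a::euclidean_space) \<Rightarrow> nat \<Rightarrow> 'a" where
  "gso b i = proj_perp (b ` {1..<i}) (b i)"

fun alpha :: "(nat \<Rightarrow> real ^ 'd) \<Rightarrow> real \<Rightarrow> nat \<Rightarrow> real" where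
  "alpha b \<gamma> 0 = 1"
| "alpha b \<gamma> (Suc 0) = 1"
| "alpha b \<gamma> (Suc (Suc k)) =
     max (alpha b \<gamma> (Suc k))
         (of_int \<lceil>norm (gso b (Suc (Suc k))) / (\<gamma> ^ (Suc (Suc k)) * norm (b 1))\<rceil>)"

definition A_map :: "(nat \<Rightarrow> real ^ 'd) \<Rightarrow> nat \<Rightarrow> real \<Rightarrow> real ^ 'd ^ 'd" where
  "A_map b n \<gamma> = (THE M. (\<forall>i\<in>{1..n}. M *v gso b i = gso b i /\<^sub>R alpha b \<gamma> i)
                       \<and> (\<forall>y\<in>orth_compl (b ` {1..n}). M *v y = y))"

end

theory Submission
  imports Defs
begin

text \<open>The linear map \<open>A\<close> acts diagonally on the pairwise orthogonal Gram--Schmidt vectors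
  \<open>b~\<^sub>i\<close>, so it maps each \<open>span {b\<^sub>1, \<dots>, b\<^sub>j}\<close> onto itself, and the
  Gram--Schmidt vectors of \<open>A B\<close> are just \<open>b~\<^sub>i / \<alpha>\<^sub>i\<close>. By the definition of
  \<open>\<alpha>\<^sub>i\<close> this gives \<open>\<parallel>b~'\<^sub>i\<parallel> \<le> \<gamma>\<^sup>i \<parallel>b\<^sub>1\<parallel>\<close>. If
  \<open>\<alpha>\<^sub>i < \<alpha>\<^sub>i\<^sub>+\<^sub>1\<close>, then \<open>\<alpha>\<^sub>i\<^sub>+\<^sub>1\<close> is the ceiling of
  \<open>\<parallel>b~\<^sub>i\<^sub>+\<^sub>1\<parallel> / (\<gamma>\<^sup>i\<^sup>+\<^sup>1 \<parallel>b\<^sub>1\<parallel>)\<close> and is at least 2, so the ceiling is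
  less than twice its argument and \<open>\<parallel>b~'\<^sub>i\<^sub>+\<^sub>1\<parallel> > \<gamma>\<^sup>i\<^sup>+\<^sup>1 \<parallel>b\<^sub>1\<parallel> / 2\<close>.\<close>

lemma proj_perp_eqI:
  fixes S :: "'a::euclidean_space set"
  assumes "w \<in> orth_compl S" "v - w \<in> span S"
  shows "proj_perp S v = w"
  unfolding proj_perp_def
proof (rule the_equality)
  show "w \<in> orth_compl S \<and> v - w \<in> span S" using assms by simp
next
  fix w' assume w': "w' \<in> orth_compl S \<and> v - w' \<in> span S"
  have "w - w' \<in> span S"
    using span_diff[OF w'[THEN conjunct2] assms(2)] by (simp add: algebra_simps)
  moreover have "w - w' \<in> orth_compl S"
    using w' assms unfolding orth_compl_def by (auto intro: orthogonal_clauses)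
  ultimately have "orthogonal (w - w') (w - w')" unfolding orth_compl_def by auto
  then show "w' = w" by (simp add: orthogonal_def)
qed

lemma
  fixes S :: "'a::euclidean_space set"
  shows proj_perp_in_orth_compl: "proj_perp S v \<in> orth_compl S"
    and diff_proj_perp_in_span: "v - proj_perp S v \<in> span S"
proof -
  obtain y z where "y \<in> span S" "\<And>w. w \<in> span S \<Longrightarrow> orthogonal z w" "v = y + z"
    using orthogonal_subspace_decomp_exists by blast
  then have "z \<in> orth_compl S" "v - z \<in> span S"
    unfolding orth_compl_def by (auto simp: orthogonal_commute)
  then show "proj_perp S v \<in> orth_compl S" "v - proj_perp S v \<in> span S"
    using proj_perp_eqI by metis+
qed

lemma orth_compl_span: "orth_compl (span S) = orth_compl S"
  by (simp add: orth_compl_def span_span)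

lemma span_insert_cong:
  assumes "span S = span T" "x - y \<in> span S"
  shows "span (insert x S) = span (insert y T)"
proof -
  have "z - k *\<^sub>R x \<in> span S \<longleftrightarrow> z - k *\<^sub>R y \<in> span S" for z k
  proof -
    have "z - k *\<^sub>R y = (z - k *\<^sub>R x) + k *\<^sub>R (x - y)"
      by (simp add: algebra_simps)
    then show ?thesis
      using assms(2) span_add span_diff span_scale
      by (metis add_diff_cancel_right')
  qed
  then show ?thesis using assms(1) by (simp add: span_insert)
qed

lemma span_eq_if_triangular:
  fixes c d :: "nat \<Rightarrow> 'a::real_vector"
  assumes "\<And>j. 1 \<le> j \<Longrightarrow> j < m \<Longrightarrow> c j - d j \<in> span (d ` {1..<j})"
  shows "span (c ` {1..<m}) = span (d ` {1..<m})"
proof -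
  have "span (c ` {1..<k}) = span (d ` {1..<k})" if "k \<le> m" for k
    using that
  proof (induction k)
    case 0
    then show ?case by simp
  next
    case (Suc k)
    show ?case
    proof (cases "k = 0")
      case True
      then show ?thesis by simp
    next
      case False
      then have insert: "{1..<Suc k} = insert k {1..<k}" by auto
      have "c k - d k \<in> span (d ` {1..<k})" using assms Suc.prems False by simp
      then show ?thesis
        using Suc unfolding insert image_insert by (intro span_insert_cong) simp_all
    qed
  qed
  then show ?thesis by simp
qed

lemma span_image_scaleR:
  assumes "\<And>k. k \<in> X \<Longrightarrow> s k \<noteq> 0"
  shows "span ((\<lambda>k. s k *\<^sub>R v k) ` X) = span (v ` X)"
proof -
  have "v k \<in> span ((\<lambda>k. s k *\<^sub>R v k) ` X)" if "k \<in> X" for k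
  proof -
    have "inverse (s k) *\<^sub>R (s k *\<^sub>R v k) \<in> span ((\<lambda>k. s k *\<^sub>R v k) ` X)"
      using that by (intro span_scale span_base) auto
    then show ?thesis using assms[OF that] by simp
  qed
  then show ?thesis by (auto simp: span_eq intro: span_scale span_base)
qed

lemma gso_eqI:
  assumes "w \<in> orth_compl (b ` {1..<i})" "b i - w \<in> span (b ` {1..<i})"
  shows "gso b i = w"
  unfolding gso_def using assms by (rule proj_perp_eqI)

lemma gso_in_orth_compl: "gso b i \<in> orth_compl (b ` {1..<i})"
  unfolding gso_def by (rule proj_perp_in_orth_compl)

lemma diff_gso_in_span: "b i - gso b i \<in> span (b ` {1..<i})"
  unfolding gso_def by (rule diff_proj_perp_in_span)

lemma span_gso: "span (gso b ` {1..<m}) = span (b ` {1..<m})"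
proof (rule span_eq_if_triangular)
  fix j
  show "gso b j - b j \<in> span (b ` {1..<j})"
    using span_neg[OF diff_gso_in_span[of b j]] by simp
qed

lemma gso_orthogonal_earlier:
  assumes "1 \<le> k" "k < i"
  shows "orthogonal (gso b k) (gso b i)"
proof -
  have "gso b k \<in> span (gso b ` {1..<i})"
    using assms by (intro span_base) auto
  then have "gso b k \<in> span (b ` {1..<i})"
    by (simp only: span_gso)
  then show ?thesis using gso_in_orth_compl[of b i] unfolding orth_compl_def by blast
qed

lemma gso_orthogonal:
  assumes "1 \<le> i" "1 \<le> k" "i \<noteq> k"
  shows "orthogonal (gso b i) (gso b k)"
proof (cases "k < i")
  case True
  show ?thesis
    using gso_orthogonal_earlier[OF assms(2) True] by (rule orthogonal_commute[THEN iffD1])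
next
  case False
  then have "i < k" using assms(3) by simp
  then show ?thesis by (rule gso_orthogonal_earlier[OF assms(1)])
qed

lemma gso_first: "gso b 1 = b 1"
  by (rule gso_eqI) (simp_all add: orth_compl_def orthogonal_def)

lemma gso_neq_0:
  assumes "inj_on b {1..n}" "independent (b ` {1..n})" "i \<in> {1..n}"
  shows "gso b i \<noteq> 0"
proof
  assume "gso b i = 0"
  then have "b i \<in> span (b ` {1..<i})" using diff_gso_in_span[of b i] by simp
  moreover have "b ` {1..<i} \<subseteq> b ` {1..n} - {b i}"
  proof
    fix x assume "x \<in> b ` {1..<i}"
    then obtain k where k: "k \<in> {1..<i}" "x = b k" by auto
    then have "k \<in> {1..n}" "k \<noteq> i" using assms(3) by auto
    then have "b k \<noteq> b i" using assms(1,3) unfolding inj_on_def by blast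
    then show "x \<in> b ` {1..n} - {b i}" using k \<open>k \<in> {1..n}\<close> by auto
  qed
  ultimately have "b i \<in> span (b ` {1..n} - {b i})" using span_mono by blast
  moreover have "b i \<in> b ` {1..n}" using assms(3) by auto
  ultimately show False using assms(2) unfolding dependent_def by blast
qed

lemma linear_rescaling_orthogonal_exists:
  fixes v :: "nat \<Rightarrow> 'a::euclidean_space"
  assumes "finite I"
    and orth: "\<And>i j. i \<in> I \<Longrightarrow> j \<in> I \<Longrightarrow> i \<noteq> j \<Longrightarrow> orthogonal (v i) (v j)"
    and nz: "\<And>i. i \<in> I \<Longrightarrow> v i \<noteq> 0"
  obtains f where "linear f" "\<And>i. i \<in> I \<Longrightarrow> f (v i) = s i *\<^sub>R v i"
    "\<And>y. y \<in> orth_compl (v ` I) \<Longrightarrow> f y = y"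
proof
  define c where "c k = (s k - 1) / (v k \<bullet> v k)" for k
  define f where "f x = x + (\<Sum>k\<in>I. ((x \<bullet> v k) * c k) *\<^sub>R v k)" for x
  show "linear f"
    unfolding f_def linear_iff
    by (auto simp: algebra_simps sum.distrib scaleR_sum_right)
  show "f (v i) = s i *\<^sub>R v i" if i: "i \<in> I" for i
  proof -
    have "(\<Sum>k\<in>I. ((v i \<bullet> v k) * c k) *\<^sub>R v k)
        = (\<Sum>k\<in>I. if k = i then ((v i \<bullet> v i) * c i) *\<^sub>R v i else 0)"
      using orth i by (intro sum.cong) (auto simp: orthogonal_def)
    also have "\<dots> = ((v i \<bullet> v i) * c i) *\<^sub>R v i"
      using assms(1) i by simp
    also have "\<dots> = (s i - 1) *\<^sub>R v i" using nz[OF i] by (simp add: c_def)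
    finally show ?thesis by (simp add: f_def algebra_simps)
  qed
  show "f y = y" if "y \<in> orth_compl (v ` I)" for y
    using that by (auto simp: f_def orth_compl_def orthogonal_def inner_commute intro!: sum.neutral span_base)
qed

lemma matrix_eq_on_span_orth_compl:
  fixes M N :: "real ^ 'n ^ 'm"
  assumes "\<And>v. v \<in> S \<Longrightarrow> M *v v = N *v v" "\<And>y. y \<in> orth_compl S \<Longrightarrow> M *v y = N *v y"
  shows "M = N"
proof -
  have "M *v x = N *v x" for x
  proof -
    obtain y z where yz: "y \<in> span S" "\<And>w. w \<in> span S \<Longrightarrow> orthogonal z w" "x = y + z"
      using orthogonal_subspace_decomp_exists by blast
    have "M *v y = N *v y"
      using linear_eq_on_span[OF matrix_vector_mul_linear matrix_vector_mul_linear] assms(1) yz(1)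
      by blast
    moreover have "z \<in> orth_compl S"
      using yz(2) unfolding orth_compl_def by (auto simp: orthogonal_commute)
    ultimately show ?thesis
      using assms(2) yz(3) by (simp add: matrix_vector_right_distrib)
  qed
  then show ?thesis by (simp add: matrix_eq)
qed

lemma alpha_ge_1: "1 \<le> alpha b \<gamma> i"
  by (induction b \<gamma> i rule: alpha.induct) auto

lemma alpha_pos: "0 < alpha b \<gamma> i"
  using alpha_ge_1[of b \<gamma> i] by simp

lemma A_map_gso:
  assumes "inj_on b {1..n}" "independent (b ` {1..n})" "i \<in> {1..n}"
  shows "A_map b n \<gamma> *v gso b i = gso b i /\<^sub>R alpha b \<gamma> i"
proof -
  define P where "P M \<longleftrightarrow> (\<forall>i\<in>{1..n}. M *v gso b i = gso b i /\<^sub>R alpha b \<gamma> i)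
      \<and> (\<forall>y\<in>orth_compl (gso b ` {1..n}). M *v y = y)" for M :: "real ^ 'a ^ 'a"
  have orth_compl_gso: "orth_compl (gso b ` {1..n}) = orth_compl (b ` {1..n})"
    using span_gso[of b "Suc n"] orth_compl_span
    by (metis atLeastLessThanSuc_atLeastAtMost)
  obtain f where f: "linear f"
      "\<And>i. i \<in> {1..n} \<Longrightarrow> f (gso b i) = inverse (alpha b \<gamma> i) *\<^sub>R gso b i"
      "\<And>y. y \<in> orth_compl (gso b ` {1..n}) \<Longrightarrow> f y = y"
  proof (rule linear_rescaling_orthogonal_exists[where I = "{1..n}" and v = "gso b"
      and s = "\<lambda>i. inverse (alpha b \<gamma> i)"])
    show "finite {1..n}" by simp
    show "orthogonal (gso b i) (gso b j)" if "i \<in> {1..n}" "j \<in> {1..n}" "i \<noteq> j" for i j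
      using that by (intro gso_orthogonal) auto
    show "gso b i \<noteq> 0" if "i \<in> {1..n}" for i
      using gso_neq_0[OF assms(1,2) that] .
  qed (rule that)
  have ex: "P (matrix f)"
    unfolding P_def using f fun_cong[OF matrix_vector_mul(2)[OF f(1)]] by simp
  have uniq: "M = N" if M: "P M" and N: "P N" for M N
  proof (rule matrix_eq_on_span_orth_compl)
    show "M *v v = N *v v" if "v \<in> gso b ` {1..n}" for v
      using M N that unfolding P_def by auto
    show "M *v y = N *v y" if "y \<in> orth_compl (gso b ` {1..n})" for y
      using M N that unfolding P_def by simp
  qed
  have "P (A_map b n \<gamma>)"
    unfolding A_map_def orth_compl_gso[symmetric] P_def[symmetric] by (rule theI[of P, OF ex uniq[OF _ ex]])
  then show ?thesis using assms(3) by (simp add: P_def)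
qed

lemma gso_matrix_image:
  fixes A :: "real ^ 'n ^ 'n"
  assumes A: "\<And>j. j \<in> {1..n} \<Longrightarrow> A *v gso b j = gso b j /\<^sub>R a j"
    and nz: "\<And>j. j \<in> {1..n} \<Longrightarrow> a j \<noteq> 0"
    and i: "i \<in> {1..n}"
  shows "gso (\<lambda>j. A *v b j) i = gso b i /\<^sub>R a i"
proof -
  let ?c = "\<lambda>j. A *v b j" and ?G = "gso b"
  have A_span: "A *v x \<in> span (?G ` {1..<j})" if "x \<in> span (?G ` {1..<j})" "j \<le> Suc n" for x j
  proof -
    have "?G ` {1..<j} \<subseteq> {x. A *v x \<in> span (?G ` {1..<j})}"
      using that(2) A by (auto intro!: span_scale[OF span_base])
    moreover have "subspace {x. A *v x \<in> span (?G ` {1..<j})}"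
      by (intro linear_subspace_linear_preimage matrix_vector_mul_linear subspace_span)
    ultimately show ?thesis using that(1) span_minimal by blast
  qed
  have diff_in_span: "?c j - ?G j /\<^sub>R a j \<in> span (?G ` {1..<j})" if "j \<in> {1..n}" for j
  proof -
    have "?c j - ?G j /\<^sub>R a j = A *v (b j - ?G j)"
      using A that by (simp add: matrix_vector_mult_diff_distrib)
    moreover have "b j - ?G j \<in> span (?G ` {1..<j})"
      using diff_gso_in_span span_gso by blast
    ultimately show ?thesis using that A_span by simp
  qed
  have span_scaled: "span ((\<lambda>j. ?G j /\<^sub>R a j) ` {1..<j}) = span (?G ` {1..<j})"
    if "j \<le> i" for j
    using that i nz by (intro span_image_scaleR) auto
  have span_c: "span (?c ` {1..<i}) = span (?G ` {1..<i})"
  proof -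
    have "span (?c ` {1..<i}) = span ((\<lambda>j. ?G j /\<^sub>R a j) ` {1..<i})"
      using i diff_in_span span_scaled by (intro span_eq_if_triangular) simp
    then show ?thesis using span_scaled by simp
  qed
  show ?thesis
  proof (rule gso_eqI)
    have "orth_compl (?c ` {1..<i}) = orth_compl (b ` {1..<i})"
      using span_c span_gso orth_compl_span by metis
    then show "?G i /\<^sub>R a i \<in> orth_compl (?c ` {1..<i})"
      using gso_in_orth_compl[of b i] by (simp add: orth_compl_def orthogonal_def)
    show "?c i - ?G i /\<^sub>R a i \<in> span (?c ` {1..<i})"
      using diff_in_span[OF i] span_c by simp
  qed
qed

lemma gso_A_map_image:
  assumes "inj_on b {1..n}" "independent (b ` {1..n})" "i \<in> {1..n}"
  shows "gso (\<lambda>j. A_map b n \<gamma> *v b j) i = gso b i /\<^sub>R alpha b \<gamma> i"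
proof (rule gso_matrix_image[where a = "alpha b \<gamma>" and n = n])
  show "A_map b n \<gamma> *v gso b k = gso b k /\<^sub>R alpha b \<gamma> k" if "k \<in> {1..n}" for k
    using A_map_gso[OF assms(1,2) that] .
  show "alpha b \<gamma> k \<noteq> 0" for k
    using alpha_pos[of b \<gamma> k] by simp
qed (rule assms(3))

lemma alpha_le_alpha_Suc: "alpha b \<gamma> i \<le> alpha b \<gamma> (Suc i)"
  by (cases i) simp_all

lemma norm_gso_div_alpha_le:
  assumes "1 \<le> i" "1 \<le> \<gamma>" "0 < norm (b 1)"
  shows "norm (gso b i) / alpha b \<gamma> i \<le> \<gamma> ^ i * norm (b 1)"
proof (cases "i = 1")
  case True
  have "1 * norm (b 1) \<le> \<gamma> * norm (b 1)"
    using assms by (intro mult_right_mono) auto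
  moreover have "alpha b \<gamma> 1 = 1" by simp
  ultimately show ?thesis using True gso_first[of b] by simp
next
  case False
  then obtain k where k: "i = Suc (Suc k)" using assms(1) by (cases i; cases "i - 1") auto
  have pos: "0 < \<gamma> ^ i * norm (b 1)" using assms by simp
  have "norm (gso b i) / (\<gamma> ^ i * norm (b 1)) \<le> alpha b \<gamma> i"
    unfolding k alpha.simps(3) by (rule order_trans[OF le_of_int_ceiling max.cobounded2])
  then have "norm (gso b i) \<le> alpha b \<gamma> i * (\<gamma> ^ i * norm (b 1))"
    by (simp only: pos_divide_le_eq[OF pos])
  then show ?thesis by (simp add: pos_divide_le_eq[OF alpha_pos] ac_simps)
qed

lemma ceiling_div_2_less:
  fixes x :: real
  assumes "2 \<le> \<lceil>x\<rceil>"
  shows "of_int \<lceil>x\<rceil> / 2 < x"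
proof -
  have "of_int \<lceil>x\<rceil> - 1 < x" by linarith
  moreover have "(2::real) \<le> of_int \<lceil>x\<rceil>" using assms by linarith
  ultimately show ?thesis by linarith
qed

lemma norm_gso_div_alpha_Suc_gt:
  assumes "1 \<le> i" "alpha b \<gamma> i < alpha b \<gamma> (Suc i)" "0 < \<gamma>" "0 < norm (b 1)"
  shows "\<gamma> ^ Suc i * norm (b 1) / 2 < norm (gso b (Suc i)) / alpha b \<gamma> (Suc i)"
proof -
  define x where "x = norm (gso b (Suc i)) / (\<gamma> ^ Suc i * norm (b 1))"
  obtain k where k: "i = Suc k" using assms(1) by (cases i) auto
  have alpha_eq: "alpha b \<gamma> (Suc i) = of_int \<lceil>x\<rceil>"
    using assms(2) unfolding k x_def by (simp add: max_def split: if_splits)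
  have "1 < \<lceil>x\<rceil>" using assms(2) alpha_ge_1[of b \<gamma> i] alpha_eq by linarith
  then have "alpha b \<gamma> (Suc i) / 2 < x"
    using ceiling_div_2_less[of x] alpha_eq by simp
  moreover have "0 < \<gamma> ^ Suc i * norm (b 1)" using assms by simp
  ultimately have "\<gamma> ^ Suc i * norm (b 1) / 2 * alpha b \<gamma> (Suc i) < norm (gso b (Suc i))"
    unfolding x_def by (simp add: pos_less_divide_eq field_simps)
  then show ?thesis by (simp add: pos_less_divide_eq[OF alpha_pos])
qed

theorem mainTheorem12:
  fixes b :: "nat \<Rightarrow> real ^ 'd" and n :: nat and \<gamma> :: real
  assumes rat: "\<forall>i\<in>{1..n}. \<forall>k. b i $ k \<in> \<rat>"
    and basis: "inj_on b {1..n}" "independent (b ` {1..n})"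
    and gamma: "\<gamma> \<ge> 2"
  defines "b' \<equiv> (\<lambda>i. A_map b n \<gamma> *v b i)"
  shows "(\<forall>i\<in>{1..<n}. alpha b \<gamma> i \<le> alpha b \<gamma> (Suc i))
       \<and> (\<forall>i\<in>{1..<n}. alpha b \<gamma> i < alpha b \<gamma> (Suc i) \<longrightarrow>
              norm (gso b' (Suc i)) > (\<gamma> / 2) * norm (gso b' i))"
proof (intro conjI ballI impI)
  fix i
  show "alpha b \<gamma> i \<le> alpha b \<gamma> (Suc i)" by (rule alpha_le_alpha_Suc)
next
  fix i assume i: "i \<in> {1..<n}" and jump: "alpha b \<gamma> i < alpha b \<gamma> (Suc i)"
  have norm_gso_b': "norm (gso b' j) = norm (gso b j) / alpha b \<gamma> j" if "j \<in> {1..n}" for j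
    using gso_A_map_image[OF basis that] alpha_pos[of b \<gamma> j]
    unfolding b'_def by (simp add: divide_inverse_commute)
  have nb: "0 < norm (b 1)"
  proof -
    have "gso b 1 \<noteq> 0" using i by (intro gso_neq_0[OF basis]) simp
    then show ?thesis unfolding gso_first by simp
  qed
  have "\<gamma> / 2 * norm (gso b' i) \<le> \<gamma> / 2 * (\<gamma> ^ i * norm (b 1))"
    using norm_gso_div_alpha_le[of i \<gamma> b] i gamma nb
    by (intro mult_left_mono) (simp_all add: norm_gso_b')
  also have "\<dots> = \<gamma> ^ Suc i * norm (b 1) / 2" by simp
  also have "\<dots> < norm (gso b (Suc i)) / alpha b \<gamma> (Suc i)"
    using i gamma nb jump by (intro norm_gso_div_alpha_Suc_gt) auto
  also have "\<dots> = norm (gso b' (Suc i))" using i by (simp add: norm_gso_b')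
  finally show "norm (gso b' (Suc i)) > \<gamma> / 2 * norm (gso b' i)" .
qed

end
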